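(* Let $X$ be a topological space in which every open set is a union of countably many clopen sets. The following are equivalent: (1) every subspace of $X$ satisfies $\mathsf{U}_{fin}(\mathrm{O},\Gamma)$; (2) every $G_\delta$ subset of $X$ satisfies $\mathsf{U}_{fin}(\mathrm{O},\Gamma)$; (3) for every continuous $\Psi:X\to\mathrm{EF}$, $\Psi[X]$ is bounded; (4) $X$ satisfies $\mathsf{U}_{fin}(\mathrm{O},\Gamma)$ and $X$ is a $\sigma$ space.
   Context: A cover $\mathcal{U}$ of a space $Y$ is point-cofinite if it is infinite and each point of $Y$ belongs to all but finitely many members of $\mathcal{U}$. A space $Y$ satisfies $\mathsf{U}_{fin}(\mathrm{O},\Gamma)$ if whenever $\mathcal{U}_1,\mathcal{U}_2,\dots$ are countable open covers of $Y$ none of which contains a finite subcover, there are finite $\mathcal{F}_n\subseteq\mathcal{U}_n$ such that $\{\bigcup\mathcal{F}_n:n\in\mathbb{N}\}$ is a point-cofinite cover of $Y$. A space is a $\sigma$ space if each of its $G_\delta$ subsets is $F_\sigma$. Let $\overline{\mathbb{N}}=\mathbb{N}\cup\{\infty\}$ be the one-point compactification of $\mathbb{N}$, with $\overline{\mathbb{N}}^{\mathbb{N}}$ carrying the product topology; $\mathrm{EF}\subseteq\overline{\mathbb{N}}^{\mathbb{N}}$ is the subspace of those $f$ with $f(n)<\infty$ for all but finitely many $n$. A set $Y\subseteq\mathrm{EF}$ is bounded if there is $g\in\mathbb{N}^{\mathbb{N}}$ such that for each $f\in Y$, $f(n)\le g(n)$ for all but finitely many $n$. *)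

theory Defs
  imports "HOL-Analysis.Analysis"
begin

definition point_cofinite_cover :: "'a topology \<Rightarrow> 'a set set \<Rightarrow> bool" where
  "point_cofinite_cover T V \<longleftrightarrow>
     infinite V \<and> (\<forall>x\<in>topspace T. finite {W\<in>V. x \<notin> W})"

definition ctbl_open_cover_no_fin_sub :: "'a topology \<Rightarrow> 'a set set \<Rightarrow> bool" where
  "ctbl_open_cover_no_fin_sub T U \<longleftrightarrow>
     countable U \<and> (\<forall>W\<in>U. openin T W) \<and> topspace T \<subseteq> \<Union>U \<and>
     \<not> (\<exists>F\<subseteq>U. finite F \<and> topspace T \<subseteq> \<Union>F)"

definition Ufin_O_Gamma :: "'a topology \<Rightarrow> bool" where
  "Ufin_O_Gamma T \<longleftrightarrow>
     (\<forall>\<U> :: nat \<Rightarrow> 'a set set. (\<forall>n. ctbl_open_cover_no_fin_sub T (\<U> n)) \<longrightarrow>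
        (\<exists>\<F> :: nat \<Rightarrow> 'a set set. (\<forall>n. finite (\<F> n) \<and> \<F> n \<subseteq> \<U> n) \<and>
           point_cofinite_cover T (range (\<lambda>n. \<Union>(\<F> n)))))"

definition sigma_space :: "'a topology \<Rightarrow> bool" where
  "sigma_space T \<longleftrightarrow> (\<forall>S. gdelta_in T S \<longrightarrow> fsigma_in T S)"

text \<open>The one-point compactification of N is enat with its order topology
  (open_enat from HOL-Library.Extended_Real): N is discrete and neighbourhoods of
  infinity are the sets containing a tail {n<..}.\<close>
definition Nbar_top :: "enat topology" where
  "Nbar_top = euclidean"

definition EF_set :: "(nat \<Rightarrow> enat) set" where
  "EF_set = {f. finite {n. f n = \<infinity>}}"

definition EF_top :: "(nat \<Rightarrow> enat) topology" where
  "EF_top = subtopology (product_topology (\<lambda>_. Nbar_top) UNIV) EF_set"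

definition EF_bounded :: "(nat \<Rightarrow> enat) set \<Rightarrow> bool" where
  "EF_bounded Y \<longleftrightarrow> (\<exists>g :: nat \<Rightarrow> nat. \<forall>f\<in>Y. finite {n. \<not> f n \<le> enat (g n)})"

end

theory Submission
  imports Defs
begin

text \<open>
  The proof is organised around sequences of clopen "pieces" c n j (n, j natural numbers)
  such that, for each n, the pieces c n 0, c n 1, ... cover a given set Y.  Sending a point to
  the index of the first piece containing it gives a continuous map into EF, and the image of Y
  is bounded exactly when some g : nat \<Rightarrow> nat makes every y \<in> Y lie in
  c n 0 \<union> ... \<union> c n (g n) for all but finitely many n; this is cover_bounded c Y.

  Together with clopen refinements of countable covers this gives:
  a subspace Y satisfies U_fin(O,Gamma) iff cover_bounded c Y for every clopen piece sequence c
  covering Y.  The theorem then follows from four implications: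
  (1) \<Longrightarrow> (2) is trivial; (2) \<Longrightarrow> (3) splits X into the G-delta sets on which \<Psi> is finite from
  some coordinate on; (3) \<Longrightarrow> (4) uses first-index maps, for the sigma property with one coordinate
  per closed piece of the complement of a G-delta set; (4) \<Longrightarrow> (1) covers Y by a G-delta set,
  i.e. a countable union of closed sets, each of which inherits bounds from X.
\<close>

abbreviation clopenin :: "'a topology \<Rightarrow> 'a set \<Rightarrow> bool" where
  "clopenin X S \<equiv> openin X S \<and> closedin X S"

definition open_sets_countably_clopen :: "'a topology \<Rightarrow> bool" where
  "open_sets_countably_clopen X \<longleftrightarrow>
     (\<forall>U. openin X U \<longrightarrow> (\<exists>\<C>. countable \<C> \<and> (\<forall>C\<in>\<C>. clopenin X C) \<and> U = \<Union>\<C>))"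

text \<open>In such a space every open set is the union of a disjoint sequence of clopen sets
  (disjointify an enumeration of the given countable clopen family).\<close>
lemma open_clopen_sequence:
  assumes "open_sets_countably_clopen X" "openin X V"
  obtains d :: "nat \<Rightarrow> 'a set"
  where "\<And>k. clopenin X (d k)" "disjoint_family d" "V = (\<Union>k. d k)"
proof -
  obtain \<C> where \<C>: "countable \<C>" "\<forall>C\<in>\<C>. clopenin X C" "V = \<Union>\<C>"
    using assms(1)[unfolded open_sets_countably_clopen_def, rule_format, OF assms(2)] by blast
  define e where "e = from_nat_into (insert {} \<C>)"
  have e_range: "range e = insert {} \<C>"
    unfolding e_def using \<C>(1) by (intro range_from_nat_into) auto
  have e_clopen: "clopenin X (e k)" for k
  proof -
    have "e k \<in> insert {} \<C>" using e_range by blast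
    then show ?thesis using \<C>(2) by auto
  qed
  show thesis
  proof (rule that[of "disjointed e"])
    show "clopenin X (disjointed e k)" for k
    proof
      show "openin X (disjointed e k)"
        unfolding disjointed_def using e_clopen by (intro openin_diff closedin_Union) auto
      show "closedin X (disjointed e k)"
        unfolding disjointed_def using e_clopen by (intro closedin_diff openin_Union) auto
    qed
    show "disjoint_family (disjointed e)" by (rule disjoint_family_disjointed)
    show "V = (\<Union>k. disjointed e k)" by (simp add: UN_disjointed_eq e_range \<C>(3))
  qed
qed

lemma open_imp_fsigma:
  assumes "open_sets_countably_clopen X" "openin X U"
  shows "fsigma_in X U"
proof -
  obtain d :: "nat \<Rightarrow> 'a set" where d: "\<And>k. clopenin X (d k)" "U = (\<Union>k. d k)"
    using open_clopen_sequence[OF assms] by blast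
  have "fsigma_in X S" if "S \<in> range d" for S
    using that d(1) by (auto intro: closed_imp_fsigma_in)
  then show ?thesis unfolding d(2) by (intro fsigma_in_Union) auto
qed

lemma disjoint_family_prod_decode:
  fixes Z :: "nat \<Rightarrow> nat \<Rightarrow> 'a set"
  assumes "\<And>x n k n' k'. x \<in> Z n k \<Longrightarrow> x \<in> Z n' k' \<Longrightarrow> (n, k) = (n', k')"
  shows "disjoint_family (\<lambda>j. case_prod Z (prod_decode j))"
  unfolding disjoint_family_on_def
proof (intro ballI impI)
  fix j j' :: nat assume "j \<noteq> j'"
  then have "prod_decode j \<noteq> prod_decode j'" by (metis prod_decode_inverse)
  moreover obtain n k n' k' where "prod_decode j = (n, k)" "prod_decode j' = (n', k')"
    by (metis surj_pair)
  ultimately show "case_prod Z (prod_decode j) \<inter> case_prod Z (prod_decode j') = {}"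
    using assms by auto
qed

lemma UN_prod_decode: "(\<Union>j. case_prod Z (prod_decode j)) = (\<Union>n k. Z n k)"
proof
  show "(\<Union>j. case_prod Z (prod_decode j)) \<subseteq> (\<Union>n k. Z n k)"
    by (auto split: prod.splits)
  show "(\<Union>n k. Z n k) \<subseteq> (\<Union>j. case_prod Z (prod_decode j))"
  proof
    fix x assume "x \<in> (\<Union>n k. Z n k)"
    then obtain n k where "x \<in> Z n k" by blast
    then have "x \<in> case_prod Z (prod_decode (prod_encode (n, k)))" by simp
    then show "x \<in> (\<Union>j. case_prod Z (prod_decode j))" by (rule UN_I[OF UNIV_I])
  qed
qed

lemma closed_open_disjoint_closed_decomposition:
  assumes X: "open_sets_countably_clopen X" and C: "closedin X C" and D: "openin X D"
  obtains Z :: "nat \<Rightarrow> 'a set"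
  where "\<And>k. closedin X (Z k)" "disjoint_family Z" "C \<inter> D = (\<Union>k. Z k)"
proof -
  obtain d :: "nat \<Rightarrow> 'a set" where d: "\<And>k. clopenin X (d k)" "disjoint_family d" "D = (\<Union>k. d k)"
    using open_clopen_sequence[OF X D] by blast
  show thesis
  proof (rule that[of "\<lambda>k. C \<inter> d k"])
    show "closedin X (C \<inter> d k)" for k using closedin_Int[OF C] d(1) by blast
    show "disjoint_family (\<lambda>k. C \<inter> d k)" using d(2) unfolding disjoint_family_on_def by blast
    show "C \<inter> D = (\<Union>k. C \<inter> d k)" using d(3) by blast
  qed
qed

text \<open>Every F-sigma set is a disjoint union of countably many closed sets: write it as
  the union of closed sets C n, disjointify, and decompose each difference
  C n - (C 0 \<union> ... \<union> C (n - 1)), a closed set intersected with an open one.\<close>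
lemma fsigma_disjoint_closed_decomposition:
  assumes X: "open_sets_countably_clopen X" and F: "fsigma_in X F"
  obtains Z :: "nat \<Rightarrow> 'a set"
  where "\<And>j. closedin X (Z j)" "disjoint_family Z" "F = (\<Union>j. Z j)"
proof -
  obtain C :: "nat \<Rightarrow> 'a set" where C_closed: "\<And>n. closedin X (C n)" and C_union: "(\<Union>n. C n) = F"
    using F unfolding fsigma_in_ascending by blast
  \<comment> \<open>The disjointed pieces of C are closed sets intersected with open sets.\<close>
  have ex: "\<exists>Z::nat \<Rightarrow> 'a set. (\<forall>k. closedin X (Z k)) \<and> disjoint_family Z \<and> disjointed C n = (\<Union>k. Z k)"
    for n
  proof -
    have "disjointed C n = C n \<inter> (topspace X - (\<Union>i<n. C i))"
      using closedin_subset[OF C_closed[of n]] by (auto simp: disjointed_def atLeast0LessThan)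
    moreover have "openin X (topspace X - (\<Union>i<n. C i))"
      using C_closed by (intro openin_diff openin_topspace closedin_Union) auto
    ultimately obtain Z :: "nat \<Rightarrow> 'a set"
      where "\<And>k. closedin X (Z k)" "disjoint_family Z" "disjointed C n = (\<Union>k. Z k)"
      using closed_open_disjoint_closed_decomposition[OF X C_closed] by metis
    then show ?thesis by blast
  qed
  define Z where "Z n = (SOME Z::nat \<Rightarrow> 'a set.
      (\<forall>k. closedin X (Z k)) \<and> disjoint_family Z \<and> disjointed C n = (\<Union>k. Z k))" for n
  have Z: "(\<forall>k. closedin X (Z n k)) \<and> disjoint_family (Z n) \<and> disjointed C n = (\<Union>k. Z n k)" for n
    unfolding Z_def by (rule someI_ex[OF ex])
  show thesis
  proof (rule that[of "\<lambda>j. case_prod Z (prod_decode j)"])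
    show "closedin X (case_prod Z (prod_decode j))" for j
      using Z by (simp add: split_def)
    show "disjoint_family (\<lambda>j. case_prod Z (prod_decode j))"
    proof (rule disjoint_family_prod_decode)
      fix x n k n' k' assume x: "x \<in> Z n k" "x \<in> Z n' k'"
      then have "x \<in> disjointed C n" "x \<in> disjointed C n'" using Z by blast+
      then have "n = n'" using disjoint_family_disjointed[of C] unfolding disjoint_family_on_def by blast
      moreover from this have "k = k'" using x Z[of n] unfolding disjoint_family_on_def by blast
      ultimately show "(n, k) = (n', k')" by simp
    qed
    have "(\<Union>n k. Z n k) = (\<Union>n. disjointed C n)" using Z by blast
    then show "F = (\<Union>j. case_prod Z (prod_decode j))"
      by (simp add: UN_prod_decode UN_disjointed_eq C_union)
  qed
qed

lemma clopen_refinement: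
  fixes \<U> :: "'a set set"
  assumes X: "open_sets_countably_clopen X" and "countable \<U>" "\<U> \<noteq> {}"
    and "\<And>U. U \<in> \<U> \<Longrightarrow> openin (subtopology X Y) U" and "Y \<subseteq> \<Union>\<U>"
  obtains c :: "nat \<Rightarrow> 'a set"
  where "\<And>j. clopenin X (c j)" "\<And>j. \<exists>U\<in>\<U>. c j \<inter> Y \<subseteq> U" "Y \<subseteq> (\<Union>j. c j)"
proof -
  have ex: "\<exists>d::nat \<Rightarrow> 'a set. (\<forall>k. clopenin X (d k)) \<and> (\<Union>k. d k) \<inter> Y = U"
    if "U \<in> \<U>" for U
  proof -
    have "openin (subtopology X Y) U" using that by (rule assms(4))
    then obtain V where V: "openin X V" "U = V \<inter> Y"
      unfolding openin_subtopology by blast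
    obtain d :: "nat \<Rightarrow> 'a set" where "\<And>k. clopenin X (d k)" "V = (\<Union>k. d k)"
      using open_clopen_sequence[OF X V(1)] by blast
    then show ?thesis using V(2) by blast
  qed
  define d where "d U = (SOME d::nat \<Rightarrow> 'a set. (\<forall>k. clopenin X (d k)) \<and> (\<Union>k. d k) \<inter> Y = U)"
    for U
  have d: "(\<forall>k. clopenin X (d U k)) \<and> (\<Union>k. d U k) \<inter> Y = U" if "U \<in> \<U>" for U
    unfolding d_def by (rule someI_ex[OF ex[OF that]])
  define p where "p = from_nat_into (\<U> \<times> (UNIV :: nat set))"
  have p_range: "range p = \<U> \<times> UNIV"
    unfolding p_def using assms(2,3) by (intro range_from_nat_into) auto
  define c where "c j = d (fst (p j)) (snd (p j))" for j
  show thesis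
  proof (rule that)
    fix j
    have "p j \<in> \<U> \<times> UNIV" using p_range by blast
    then have U: "fst (p j) \<in> \<U>" by auto
    then show "clopenin X (c j)" unfolding c_def using d by blast
    have "c j \<inter> Y \<subseteq> fst (p j)" unfolding c_def using d[OF U] by blast
    with U show "\<exists>U\<in>\<U>. c j \<inter> Y \<subseteq> U" by blast
  next
    show "Y \<subseteq> (\<Union>j. c j)"
    proof
      fix y assume "y \<in> Y"
      then obtain U where U: "U \<in> \<U>" "y \<in> U" using assms(5) by blast
      then obtain k where k: "y \<in> d U k" using d[OF U(1)] by blast
      have "(U, k) \<in> range p" using p_range U(1) by simp
      then obtain j where "p j = (U, k)" by (metis rangeE)
      then have "y \<in> c j" unfolding c_def using k by simp
      then show "y \<in> (\<Union>j. c j)" by blast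
    qed
  qed
qed

definition first_index :: "(nat \<Rightarrow> 'a set) \<Rightarrow> 'a \<Rightarrow> enat" where
  "first_index c x = (if \<exists>j. x \<in> c j then enat (LEAST j. x \<in> c j) else \<infinity>)"

lemma first_index_le_iff: "first_index c x \<le> enat k \<longleftrightarrow> (\<exists>j\<le>k. x \<in> c j)"
proof
  assume "first_index c x \<le> enat k"
  then have ex: "\<exists>j. x \<in> c j" and "(LEAST j. x \<in> c j) \<le> k"
    by (auto simp: first_index_def split: if_splits)
  then show "\<exists>j\<le>k. x \<in> c j" using LeastI_ex[OF ex] by blast
next
  assume "\<exists>j\<le>k. x \<in> c j"
  then show "first_index c x \<le> enat k"
    by (auto simp: first_index_def intro: order_trans[OF Least_le])
qed

lemma first_index_eq_infinity_iff: "first_index c x = \<infinity> \<longleftrightarrow> x \<notin> (\<Union>j. c j)"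
  by (auto simp: first_index_def)

lemma first_index_eq_enat_iff: "first_index c x = enat k \<longleftrightarrow> x \<in> c k \<and> (\<forall>j<k. x \<notin> c j)"
proof
  assume "first_index c x = enat k"
  then have ex: "\<exists>j. x \<in> c j" and "(LEAST j. x \<in> c j) = k"
    by (auto simp: first_index_def split: if_splits)
  then show "x \<in> c k \<and> (\<forall>j<k. x \<notin> c j)"
    using LeastI_ex[OF ex] not_less_Least by blast
next
  assume "x \<in> c k \<and> (\<forall>j<k. x \<notin> c j)"
  then show "first_index c x = enat k"
    by (auto simp: first_index_def intro!: Least_equality) (meson not_le)
qed

lemma continuous_map_enatI:
  fixes f :: "'a \<Rightarrow> enat"
  assumes "\<And>k. openin X {x\<in>topspace X. f x = enat k}"
      and "\<And>k. openin X {x\<in>topspace X. enat k < f x}"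
  shows "continuous_map X euclidean f"
  unfolding continuous_map_def
proof (intro conjI allI impI)
  show "f \<in> topspace X \<rightarrow> topspace euclidean" by simp
  fix U :: "enat set" assume "openin euclidean U"
  then have U: "open U" by simp
  show "openin X {x \<in> topspace X. f x \<in> U}"
  proof (subst openin_subopen, intro ballI)
    fix x assume x: "x \<in> {x \<in> topspace X. f x \<in> U}"
    show "\<exists>T. openin X T \<and> x \<in> T \<and> T \<subseteq> {x \<in> topspace X. f x \<in> U}"
    proof (cases "f x")
      case (enat k)
      then show ?thesis using x
        by (intro exI[of _ "{x\<in>topspace X. f x = enat k}"]) (auto intro: assms)
    next
      case infinity
      with x U obtain n :: nat where "{enat n <..} \<subseteq> U"
        using open_enat_iff by auto
      then show ?thesis using x infinity
        by (intro exI[of _ "{x\<in>topspace X. enat n < f x}"]) (auto intro: assms)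
    qed
  qed
qed

lemma continuous_first_index:
  assumes "\<And>j. clopenin X (c j)"
  shows "continuous_map X euclidean (first_index c)"
proof (rule continuous_map_enatI)
  fix k
  have "{x\<in>topspace X. first_index c x = enat k} = c k - (\<Union>j<k. c j)"
    using openin_subset[of X "c k"] assms by (auto simp: first_index_eq_enat_iff)
  moreover have "openin X (c k - (\<Union>j<k. c j))"
    using assms by (intro openin_diff closedin_Union) auto
  ultimately show "openin X {x\<in>topspace X. first_index c x = enat k}" by simp
  have "{x\<in>topspace X. enat k < first_index c x} = topspace X - (\<Union>j\<le>k. c j)"
    by (auto simp: not_le[symmetric] first_index_le_iff)
  moreover have "openin X (topspace X - (\<Union>j\<le>k. c j))"
    using assms by (intro openin_diff closedin_Union) auto
  ultimately show "openin X {x\<in>topspace X. enat k < first_index c x}" by simp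
qed

lemma continuous_map_EF_iff:
  "continuous_map X EF_top \<Psi> \<longleftrightarrow>
     (\<forall>n. continuous_map X euclidean (\<lambda>x. \<Psi> x n)) \<and> (\<forall>x\<in>topspace X. finite {n. \<Psi> x n = \<infinity>})"
  by (auto simp: EF_top_def Nbar_top_def EF_set_def continuous_map_in_subtopology
      continuous_map_componentwise_UNIV Pi_iff)

lemma continuous_first_index_EF:
  assumes "\<And>n j. clopenin X (c n j)"
    and "\<And>x. x \<in> topspace X \<Longrightarrow> finite {n. x \<notin> (\<Union>j. c n j)}"
  shows "continuous_map X EF_top (\<lambda>x n. first_index (c n) x)"
  unfolding continuous_map_EF_iff first_index_eq_infinity_iff
proof (intro conjI allI ballI)
  show "continuous_map X euclidean (\<lambda>x. first_index (c n) x)" for n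
    using continuous_first_index[of X "c n"] assms(1) by simp
qed (rule assms(2))

definition cover_bounded :: "(nat \<Rightarrow> nat \<Rightarrow> 'a set) \<Rightarrow> 'a set \<Rightarrow> bool" where
  "cover_bounded c Y \<longleftrightarrow> (\<exists>g::nat \<Rightarrow> nat. \<forall>y\<in>Y. finite {n. \<forall>j\<le>g n. y \<notin> c n j})"

lemma cover_bounded_mono:
  assumes "cover_bounded c' Y'" "Y \<subseteq> Y'"
    and "\<And>y n j. y \<in> Y \<Longrightarrow> m \<le> n \<Longrightarrow> y \<in> c' n j \<Longrightarrow> y \<in> c n j"
  shows "cover_bounded c Y"
proof -
  obtain g where g: "\<forall>y\<in>Y'. finite {n. \<forall>j\<le>g n. y \<notin> c' n j}"
    using assms(1) unfolding cover_bounded_def by blast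
  have "finite {n. \<forall>j\<le>g n. y \<notin> c n j}" if "y \<in> Y" for y
  proof (rule finite_subset)
    show "{n. \<forall>j\<le>g n. y \<notin> c n j} \<subseteq> {..<m} \<union> {n. \<forall>j\<le>g n. y \<notin> c' n j}"
      using assms(3)[OF that] by (auto simp: not_less)
    show "finite ({..<m} \<union> {n. \<forall>j\<le>g n. y \<notin> c' n j})"
      using g that assms(2) by auto
  qed
  then show ?thesis unfolding cover_bounded_def by blast
qed

text \<open>Boundedness is preserved under countable unions (take the maximum of the first n bounds).\<close>
lemma cover_bounded_UN:
  fixes Y :: "nat \<Rightarrow> 'a set"
  assumes "\<And>i. cover_bounded c (Y i)"
  shows "cover_bounded c (\<Union>i. Y i)"
proof -
  have "\<forall>i. \<exists>g. \<forall>y\<in>Y i. finite {n. \<forall>j\<le>g n. y \<notin> c n j}"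
    using assms unfolding cover_bounded_def by blast
  from choice[OF this] obtain g where g: "\<And>i y. y \<in> Y i \<Longrightarrow> finite {n. \<forall>j\<le>g i n. y \<notin> c n j}"
    by blast
  define h where "h n = Max ((\<lambda>i. g i n) ` {..n})" for n
  have "finite {n. \<forall>j\<le>h n. y \<notin> c n j}" if "y \<in> Y i" for y i
  proof (rule finite_subset)
    have "g i n \<le> h n" if "i \<le> n" for n
      unfolding h_def using that by (intro Max_ge) auto
    then show "{n. \<forall>j\<le>h n. y \<notin> c n j} \<subseteq> {..<i} \<union> {n. \<forall>j\<le>g i n. y \<notin> c n j}"
      by (auto simp: not_less) (meson order_trans)
    show "finite ({..<i} \<union> {n. \<forall>j\<le>g i n. y \<notin> c n j})"
      using g that by simp
  qed
  then show ?thesis unfolding cover_bounded_def by (intro exI[of _ h]) blast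
qed

lemma EF_bounded_if_fibres_bounded:
  assumes "cover_bounded (\<lambda>n j. {x \<in> S. \<Psi> x n = enat j}) S"
  shows "EF_bounded (\<Psi> ` S)"
proof -
  obtain g where g: "\<And>x. x \<in> S \<Longrightarrow> finite {n. \<forall>j\<le>g n. x \<notin> {x \<in> S. \<Psi> x n = enat j}}"
    using assms unfolding cover_bounded_def by blast
  have "finite {n. \<not> \<Psi> x n \<le> enat (g n)}" if "x \<in> S" for x
  proof (rule finite_subset[OF _ g[OF that]])
    show "{n. \<not> \<Psi> x n \<le> enat (g n)} \<subseteq> {n. \<forall>j\<le>g n. x \<notin> {x \<in> S. \<Psi> x n = enat j}}"
      using that by auto
  qed
  then show ?thesis unfolding EF_bounded_def by blast
qed

lemma finite_subset_chain_bound: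
  fixes B :: "nat \<Rightarrow> 'a set"
  assumes "incseq B" "finite F" "F \<subseteq> range B"
  shows "\<exists>k. \<Union>F \<subseteq> B k"
proof -
  obtain S where S: "finite S" "F = B ` S"
    using finite_subset_image[OF assms(2,3)] by blast
  have "B s \<subseteq> B (Max (insert 0 S))" if "s \<in> S" for s
    using S(1) that by (intro incseqD[OF assms(1)]) auto
  then show ?thesis using S(2) by blast
qed

lemma increasing_cover_no_finite_subcover:
  assumes "\<And>k. openin T (B k)" "incseq B" "topspace T \<subseteq> (\<Union>k. B k)"
    and "\<And>k. \<not> topspace T \<subseteq> B k"
  shows "ctbl_open_cover_no_fin_sub T (range B)"
  unfolding ctbl_open_cover_no_fin_sub_def
proof (intro conjI)
  show "countable (range B)" by simp
  show "\<forall>W\<in>range B. openin T W" using assms(1) by blast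
  show "topspace T \<subseteq> \<Union>(range B)" using assms(3) .
  show "\<not> (\<exists>F\<subseteq>range B. finite F \<and> topspace T \<subseteq> \<Union>F)"
  proof
    assume "\<exists>F\<subseteq>range B. finite F \<and> topspace T \<subseteq> \<Union>F"
    then obtain F where F: "F \<subseteq> range B" "finite F" and cover: "topspace T \<subseteq> \<Union>F"
      by blast
    from finite_subset_chain_bound[OF assms(2) F(2,1)] obtain k where "\<Union>F \<subseteq> B k" ..
    with cover have "topspace T \<subseteq> B k" by (rule subset_trans)
    with assms(4) show False by blast
  qed
qed

lemma Ufin_O_GammaD:
  fixes \<U> :: "nat \<Rightarrow> 'a set set"
  assumes "Ufin_O_Gamma T" "\<And>n. ctbl_open_cover_no_fin_sub T (\<U> n)"
  obtains \<F> where "\<And>n. finite (\<F> n) \<and> \<F> n \<subseteq> \<U> n"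
    and "point_cofinite_cover T (range (\<lambda>n. \<Union>(\<F> n)))"
proof -
  have "(\<forall>n. ctbl_open_cover_no_fin_sub T (\<U> n)) \<longrightarrow>
      (\<exists>\<F>. (\<forall>n. finite (\<F> n) \<and> \<F> n \<subseteq> \<U> n) \<and> point_cofinite_cover T (range (\<lambda>n. \<Union>(\<F> n))))"
    using assms(1) unfolding Ufin_O_Gamma_def by (rule spec)
  with assms(2) obtain \<F> where "\<forall>n. finite (\<F> n) \<and> \<F> n \<subseteq> \<U> n"
    and "point_cofinite_cover T (range (\<lambda>n. \<Union>(\<F> n)))"
    by blast
  then show thesis using that by blast
qed

lemma point_cofinite_cover_reindex:
  fixes W :: "nat \<Rightarrow> 'a set"
  assumes "point_cofinite_cover T (range W)"
  obtains m where "\<And>i. i \<le> m i" "\<And>x. x \<in> topspace T \<Longrightarrow> finite {i. x \<notin> W (m i)}"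
proof -
  have "\<exists>j. W j \<notin> W ` {..<i}" for i
  proof (rule ccontr)
    assume "\<nexists>j. W j \<notin> W ` {..<i}"
    then have "range W \<subseteq> W ` {..<i}" by blast
    then have "finite (range W)" by (rule finite_subset) (intro finite_imageI finite_lessThan)
    with assms show False unfolding point_cofinite_cover_def by blast
  qed
  then have "\<forall>i. \<exists>j. W j \<notin> W ` {..<i}" by blast
  from choice[OF this] obtain m where m: "\<And>i. W (m i) \<notin> W ` {..<i}" by blast
  have "i \<le> m i" for i
  proof (rule ccontr)
    assume "\<not> i \<le> m i"
    then have "W (m i) \<in> W ` {..<i}" by simp
    with m show False by blast
  qed
  moreover have "finite {i. x \<notin> W (m i)}" if "x \<in> topspace T" for x
  proof -
    have "{i. W (m i) = W j} \<subseteq> {..j}" for j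
    proof
      fix i assume "i \<in> {i. W (m i) = W j}"
      then have "W (m i) = W j" by simp
      with m[of i] show "i \<in> {..j}" by (cases "j < i") auto
    qed
    then have "finite {i. W (m i) = V}" if "V \<in> range W" for V
      using that by (auto intro: finite_subset[OF _ finite_atMost])
    then have "finite (\<Union>V\<in>{V \<in> range W. x \<notin> V}. {i. W (m i) = V})"
      using assms that unfolding point_cofinite_cover_def by auto
    then show ?thesis by (rule finite_subset[rotated]) auto
  qed
  ultimately show ?thesis using that by blast
qed

lemma prefix_intersection_covers:
  fixes A B :: "nat \<Rightarrow> nat \<Rightarrow> 'a set"
  assumes A_open: "\<And>n k. openin T (A n k)" and A_inc: "\<And>n. incseq (A n)"
    and A_cover: "\<And>n. topspace T \<subseteq> (\<Union>k. A n k)"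
    and B_def: "\<And>n k. B n k = (\<Inter>j\<le>n. A j k) \<inter> topspace T"
  shows "openin T (B n k)" and "incseq (B n)" and "topspace T \<subseteq> (\<Union>k. B n k)"
proof -
  show "openin T (B n k)"
    unfolding B_def by (intro openin_INT A_open) auto
  have A_mono: "A j k \<subseteq> A j k'" if "k \<le> k'" for j k k'
    using incseqD[OF A_inc that] .
  show "incseq (B n)"
  proof (rule incseq_SucI)
    show "B n k \<subseteq> B n (Suc k)" for k
    proof -
      have "A j k \<subseteq> A j (Suc k)" for j using A_mono by simp
      then show ?thesis unfolding B_def by blast
    qed
  qed
  show "topspace T \<subseteq> (\<Union>k. B n k)"
  proof
    fix x assume x: "x \<in> topspace T"
    have ev: "eventually (\<lambda>k. x \<in> A j k) sequentially" for j
    proof -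
      obtain k0 where "x \<in> A j k0" using A_cover x by blast
      then show ?thesis
        unfolding eventually_sequentially using A_mono by blast
    qed
    have "eventually (\<lambda>k. \<forall>j \<in> {..n}. x \<in> A j k) sequentially"
      by (rule eventually_ball_finite) (auto intro: ev)
    then obtain k where "\<forall>j \<in> {..n}. x \<in> A j k"
      unfolding eventually_sequentially by auto
    then show "x \<in> (\<Union>k. B n k)" using x unfolding B_def by blast
  qed
qed

text \<open>The principle is applied to the covers by the intersections B n k of
  the members A j k, j \<le> n, and the selected sets are pulled back along a subsequence.\<close>
lemma Ufin_increasing_covers_no_member_covers:
  fixes A :: "nat \<Rightarrow> nat \<Rightarrow> 'a set"
  assumes Ufin: "Ufin_O_Gamma T"
    and A_open: "\<And>n k. openin T (A n k)" and A_inc: "\<And>n. incseq (A n)"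
    and A_cover: "\<And>n. topspace T \<subseteq> (\<Union>k. A n k)"
    and A_not_cover: "\<And>n k. \<not> topspace T \<subseteq> A n k"
  shows "\<exists>g. \<forall>x\<in>topspace T. finite {n. x \<notin> A n (g n)}"
proof -
  \<comment> \<open>B n k refines the covers of all levels up to n, so that later levels control earlier ones.\<close>
  define B where "B n k = (\<Inter>j\<le>n. A j k) \<inter> topspace T" for n k
  note B = prefix_intersection_covers[OF A_open A_inc A_cover B_def]
  have B_sub: "B n k \<subseteq> A j k" if "j \<le> n" for n j k
  proof -
    have "j \<in> {..n}" using that by simp
    then show ?thesis unfolding B_def by blast
  qed
  have B_not_cover: "\<not> topspace T \<subseteq> B n k" for n k
  proof
    assume "topspace T \<subseteq> B n k"
    also have "B n k \<subseteq> A n k" by (rule B_sub) simp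
    finally show False using A_not_cover by blast
  qed
  obtain F where F: "\<And>n. finite (F n) \<and> F n \<subseteq> range (B n)"
    and F_cof: "point_cofinite_cover T (range (\<lambda>n. \<Union>(F n)))"
    using Ufin_O_GammaD[of T "\<lambda>n. range (B n)", OF Ufin
        increasing_cover_no_finite_subcover[OF B B_not_cover]] by blast
  have "\<exists>k. \<Union>(F n) \<subseteq> B n k" for n
    using F[of n] by (intro finite_subset_chain_bound[OF B(2)[of n]]) auto
  then have "\<forall>n. \<exists>k. \<Union>(F n) \<subseteq> B n k" ..
  from choice[OF this] obtain K where K: "\<forall>n. \<Union>(F n) \<subseteq> B n (K n)" ..
  obtain m where m_ge: "\<And>i. i \<le> m i"
    and m_fin: "\<And>x. x \<in> topspace T \<Longrightarrow> finite {i. x \<notin> \<Union>(F (m i))}"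
    using point_cofinite_cover_reindex[OF F_cof] by blast
  have F_sub: "\<Union>(F (m n)) \<subseteq> A n (K (m n))" for n
    using spec[OF K, of "m n"] B_sub[OF m_ge[of n]] by (rule subset_trans)
  show ?thesis
  proof (intro exI[of _ "\<lambda>n. K (m n)"] ballI)
    fix x assume x: "x \<in> topspace T"
    have "{n. x \<notin> A n (K (m n))} \<subseteq> {n. x \<notin> \<Union>(F (m n))}" using F_sub by blast
    then show "finite {n. x \<notin> A n (K (m n))}" using m_fin[OF x] by (rule finite_subset)
  qed
qed

text \<open>The same holds without the restriction: levels whose cover has a covering member are
  bounded directly, and the remaining levels are handled by the previous lemma.\<close>
lemma Ufin_increasing_covers:
  fixes A :: "nat \<Rightarrow> nat \<Rightarrow> 'a set"
  assumes Ufin: "Ufin_O_Gamma T"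
    and A_open: "\<And>n k. openin T (A n k)" and A_inc: "\<And>n. incseq (A n)"
    and A_cover: "\<And>n. topspace T \<subseteq> (\<Union>k. A n k)"
  shows "\<exists>g. \<forall>x\<in>topspace T. finite {n. x \<notin> A n (g n)}"
proof -
  define N where "N = {n. \<forall>k. \<not> topspace T \<subseteq> A n k}"
  have "\<forall>n. \<exists>k. n \<notin> N \<longrightarrow> topspace T \<subseteq> A n k" unfolding N_def by blast
  from choice[OF this] obtain g0 where g0: "\<And>n. n \<notin> N \<Longrightarrow> topspace T \<subseteq> A n (g0 n)"
    by blast
  show ?thesis
  proof (cases "finite N")
    case True
    have "{n. x \<notin> A n (g0 n)} \<subseteq> N" if "x \<in> topspace T" for x
      using g0 that by blast
    with True show ?thesis by (meson finite_subset)
  next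
    case False
    define s where "s n = (LEAST j. j \<in> N \<and> n \<le> j)" for n
    have s: "s n \<in> N" for n
    proof -
      have "\<exists>j. j \<in> N \<and> n \<le> j" using False infinite_nat_iff_unbounded_le by blast
      then show ?thesis unfolding s_def by (rule LeastI2_ex) blast
    qed
    have s_id: "s n = n" if "n \<in> N" for n
      unfolding s_def using that by (intro Least_equality) auto
    have "\<exists>g. \<forall>x\<in>topspace T. finite {n. x \<notin> A (s n) (g n)}"
    proof (rule Ufin_increasing_covers_no_member_covers[where A="\<lambda>n k. A (s n) k", OF Ufin])
      show "openin T (A (s n) k)" for n k by (rule A_open)
      show "incseq (A (s n))" for n by (rule A_inc)
      show "topspace T \<subseteq> (\<Union>k. A (s n) k)" for n by (rule A_cover)
      show "\<not> topspace T \<subseteq> A (s n) k" for n k using s[of n] unfolding N_def by blast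
    qed
    then obtain g where g: "\<forall>x\<in>topspace T. finite {n. x \<notin> A (s n) (g n)}" ..
    define h where "h n = (if n \<in> N then g n else g0 n)" for n
    show ?thesis
    proof (intro exI[of _ h] ballI)
      fix x assume x: "x \<in> topspace T"
      have "{n. x \<notin> A n (h n)} \<subseteq> {n. x \<notin> A (s n) (g n)}"
      proof
        fix n assume n: "n \<in> {n. x \<notin> A n (h n)}"
        then have "n \<in> N" using g0 x unfolding h_def by (auto split: if_splits)
        with n show "n \<in> {n. x \<notin> A (s n) (g n)}" unfolding h_def by (simp add: s_id)
      qed
      then show "finite {n. x \<notin> A n (h n)}" using bspec[OF g x] by (rule finite_subset)
    qed
  qed
qed

lemma incseq_partial_unions: "incseq (\<lambda>k. \<Union>j\<le>k. C j)"
proof (rule incseq_SucI)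
  show "(\<Union>j\<le>k. C j) \<subseteq> (\<Union>j\<le>Suc k. C j)" for k
    by (rule UN_mono) auto
qed

lemma Ufin_cover_bounded:
  assumes "Ufin_O_Gamma T" "\<And>n j. openin T (c n j)" "\<And>n. topspace T \<subseteq> (\<Union>j. c n j)"
  shows "cover_bounded c (topspace T)"
proof -
  have "\<exists>g. \<forall>x\<in>topspace T. finite {n. x \<notin> (\<Union>j\<le>g n. c n j)}"
  proof (rule Ufin_increasing_covers[where A="\<lambda>n k. \<Union>j\<le>k. c n j", OF assms(1)])
    show "openin T (\<Union>j\<le>k. c n j)" for n k
      by (intro openin_Union) (auto intro: assms(2))
    show "incseq (\<lambda>k. \<Union>j\<le>k. c n j)" for n
      by (rule incseq_partial_unions)
    show "topspace T \<subseteq> (\<Union>k. \<Union>j\<le>k. c n j)" for n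
    proof
      fix x assume "x \<in> topspace T"
      then obtain j where "x \<in> c n j" using assms(3) by blast
      then have "x \<in> (\<Union>i\<le>j. c n i)" by auto
      then show "x \<in> (\<Union>k. \<Union>i\<le>k. c n i)" by (rule UN_I[rotated]) simp
    qed
  qed
  then obtain g where g: "\<forall>x\<in>topspace T. finite {n. x \<notin> (\<Union>j\<le>g n. c n j)}" ..
  then have "\<forall>x\<in>topspace T. finite {n. \<forall>j\<le>g n. x \<notin> c n j}" by (simp add: Ball_def)
  then show ?thesis unfolding cover_bounded_def by blast
qed

lemma Ufin_subspace_cover_bounded:
  assumes Ufin: "Ufin_O_Gamma (subtopology X S)" and S: "S \<subseteq> topspace X"
    and c_open: "\<And>n j. openin X (c n j)" and c_cover: "\<And>n. m \<le> n \<Longrightarrow> S \<subseteq> (\<Union>j. c n j)"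
  shows "cover_bounded c S"
proof -
  define c' where "c' n j = S \<inter> (if m \<le> n then c n j else topspace X)" for n j
  have top: "topspace (subtopology X S) = S" using S by auto
  have "cover_bounded c' (topspace (subtopology X S))"
  proof (rule Ufin_cover_bounded[OF Ufin])
    show "openin (subtopology X S) (c' n j)" for n j
      unfolding c'_def using c_open by (intro openin_subtopology_Int2) simp
    show "topspace (subtopology X S) \<subseteq> (\<Union>j. c' n j)" for n
      unfolding top c'_def using c_cover[of n] S by (cases "m \<le> n") auto
  qed
  then show ?thesis
    by (rule cover_bounded_mono[where m=m]) (use S in \<open>auto simp: c'_def\<close>)
qed

text \<open>Closed subsets of a U_fin(O,Gamma) space are bounded for open pieces covering them: the
  complement of K is added to every piece to obtain covers of X.\<close>
lemma closed_cover_bounded: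
  assumes Ufin: "Ufin_O_Gamma X" and K: "closedin X K"
    and c_open: "\<And>n j. openin X (c n j)" and c_cover: "\<And>n. K \<subseteq> (\<Union>j. c n j)"
  shows "cover_bounded c K"
proof -
  define c' where "c' n j = (topspace X - K) \<union> c n j" for n j
  have "cover_bounded c' (topspace X)"
  proof (rule Ufin_cover_bounded[OF Ufin])
    show "openin X (c' n j)" for n j
      unfolding c'_def by (intro openin_Un openin_diff openin_topspace K c_open)
    show "topspace X \<subseteq> (\<Union>j. c' n j)" for n
      unfolding c'_def using c_cover[of n] by blast
  qed
  then show ?thesis
    by (rule cover_bounded_mono[where m=0]) (use closedin_subset[OF K] in \<open>auto simp: c'_def\<close>)
qed

lemma point_cofinite_coverI:
  fixes V :: "nat \<Rightarrow> 'a set"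
  assumes not_cover: "\<And>n. \<not> topspace T \<subseteq> V n"
    and cofinite: "\<And>x. x \<in> topspace T \<Longrightarrow> finite {n. x \<notin> V n}"
  shows "point_cofinite_cover T (range V)"
  unfolding point_cofinite_cover_def
proof (intro conjI ballI)
  show "infinite (range V)"
  proof
    assume "finite (range V)"
    from pigeonhole_infinite[OF infinite_UNIV_nat this]
    obtain n0 where n0: "infinite {n \<in> UNIV. V n = V n0}" by blast
    obtain y where y: "y \<in> topspace T" "y \<notin> V n0" using not_cover[of n0] by blast
    have "{n \<in> UNIV. V n = V n0} \<subseteq> {n. y \<notin> V n}" using y(2) by auto
    with cofinite[OF y(1)] n0 show False by (meson finite_subset)
  qed
next
  fix x assume x: "x \<in> topspace T"
  have "{W \<in> range V. x \<notin> W} \<subseteq> V ` {n. x \<notin> V n}" by auto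
  then show "finite {W \<in> range V. x \<notin> W}"
    using cofinite[OF x] by (meson finite_imageI finite_subset)
qed

text \<open>Conversely, a bounded refinement of a sequence of covers without finite subcovers yields the
  selection required by U_fin(O,Gamma): at level n take members containing the first g n + 1
  pieces.\<close>
lemma bounded_refinement_selection:
  fixes \<U> :: "nat \<Rightarrow> 'a set set" and c :: "nat \<Rightarrow> nat \<Rightarrow> 'a set"
  assumes no_fin: "\<And>n. \<not> (\<exists>F\<subseteq>\<U> n. finite F \<and> topspace T \<subseteq> \<Union>F)"
    and refine: "\<And>n j. \<exists>U\<in>\<U> n. c n j \<inter> topspace T \<subseteq> U"
    and bounded: "cover_bounded c (topspace T)"
  shows "\<exists>\<F>. (\<forall>n. finite (\<F> n) \<and> \<F> n \<subseteq> \<U> n) \<and> point_cofinite_cover T (range (\<lambda>n. \<Union>(\<F> n)))"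
proof -
  obtain g where g: "\<And>y. y \<in> topspace T \<Longrightarrow> finite {n. \<forall>j\<le>g n. y \<notin> c n j}"
    using bounded unfolding cover_bounded_def by blast
  define sel where "sel n j = (SOME U. U \<in> \<U> n \<and> c n j \<inter> topspace T \<subseteq> U)" for n j
  have sel: "sel n j \<in> \<U> n \<and> c n j \<inter> topspace T \<subseteq> sel n j" for n j
    unfolding sel_def by (rule someI_ex) (use refine in blast)
  define \<F> where "\<F> n = sel n ` {..g n}" for n
  have \<F>_finite: "finite (\<F> n)" and \<F>_sub: "\<F> n \<subseteq> \<U> n" for n
    using sel by (auto simp: \<F>_def)
  have "point_cofinite_cover T (range (\<lambda>n. \<Union>(\<F> n)))"
  proof (rule point_cofinite_coverI)
    show "\<not> topspace T \<subseteq> \<Union>(\<F> n)" for n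
      using no_fin[of n] \<F>_finite[of n] \<F>_sub[of n] by blast
    show "finite {n. y \<notin> \<Union>(\<F> n)}" if "y \<in> topspace T" for y
    proof (rule finite_subset[OF _ g[OF that]])
      show "{n. y \<notin> \<Union>(\<F> n)} \<subseteq> {n. \<forall>j\<le>g n. y \<notin> c n j}"
        using sel that unfolding \<F>_def by fastforce
    qed
  qed
  with \<F>_finite \<F>_sub show ?thesis by blast
qed

lemma cover_bounded_imp_Ufin:
  assumes X: "open_sets_countably_clopen X" and Y: "Y \<subseteq> topspace X"
    and bounded: "\<And>c. (\<And>n j. clopenin X (c n j)) \<Longrightarrow> (\<And>n. Y \<subseteq> (\<Union>j. c n j))
                      \<Longrightarrow> cover_bounded c Y"
  shows "Ufin_O_Gamma (subtopology X Y)"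
  unfolding Ufin_O_Gamma_def
proof (intro allI impI)
  fix \<U> :: "nat \<Rightarrow> 'a set set"
  assume covers: "\<forall>n. ctbl_open_cover_no_fin_sub (subtopology X Y) (\<U> n)"
  have top: "topspace (subtopology X Y) = Y" using Y by auto
  have cover_n: "countable (\<U> n) \<and> (\<forall>U\<in>\<U> n. openin (subtopology X Y) U) \<and> Y \<subseteq> \<Union>(\<U> n)
      \<and> \<not> (\<exists>F\<subseteq>\<U> n. finite F \<and> Y \<subseteq> \<Union>F)" for n
    using spec[OF covers, of n] unfolding ctbl_open_cover_no_fin_sub_def top .
  have \<U>_nonempty: "\<U> n \<noteq> {}" for n
  proof
    assume "\<U> n = {}"
    with cover_n[of n] have "{} \<subseteq> \<U> n \<and> finite {} \<and> Y \<subseteq> \<Union>{}" by simp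
    with cover_n[of n] show False by blast
  qed
  have ex_pieces: "\<exists>c::nat \<Rightarrow> 'a set. (\<forall>j. clopenin X (c j)) \<and> (\<forall>j. \<exists>U\<in>\<U> n. c j \<inter> Y \<subseteq> U)
      \<and> Y \<subseteq> (\<Union>j. c j)" for n
  proof -
    have "countable (\<U> n)" "\<And>U. U \<in> \<U> n \<Longrightarrow> openin (subtopology X Y) U" "Y \<subseteq> \<Union>(\<U> n)"
      using cover_n[of n] by simp_all
    from clopen_refinement[OF X this(1) \<U>_nonempty this(2,3)]
    obtain c :: "nat \<Rightarrow> 'a set" where "\<And>j. clopenin X (c j)" "\<And>j. \<exists>U\<in>\<U> n. c j \<inter> Y \<subseteq> U"
      "Y \<subseteq> (\<Union>j. c j)"
      by blast
    then show ?thesis by blast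
  qed
  define c where "c n = (SOME c::nat \<Rightarrow> 'a set. (\<forall>j. clopenin X (c j))
      \<and> (\<forall>j. \<exists>U\<in>\<U> n. c j \<inter> Y \<subseteq> U) \<and> Y \<subseteq> (\<Union>j. c j))" for n
  have c: "(\<forall>j. clopenin X (c n j)) \<and> (\<forall>j. \<exists>U\<in>\<U> n. c n j \<inter> Y \<subseteq> U) \<and> Y \<subseteq> (\<Union>j. c n j)" for n
    unfolding c_def by (rule someI_ex[OF ex_pieces])
  show "\<exists>\<F>. (\<forall>n. finite (\<F> n) \<and> \<F> n \<subseteq> \<U> n) \<and>
      point_cofinite_cover (subtopology X Y) (range (\<lambda>n. \<Union>(\<F> n)))"
  proof (rule bounded_refinement_selection)
    show "\<not> (\<exists>F\<subseteq>\<U> n. finite F \<and> topspace (subtopology X Y) \<subseteq> \<Union>F)" for n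
      using cover_n[of n] unfolding top by blast
    show "\<exists>U\<in>\<U> n. c n j \<inter> topspace (subtopology X Y) \<subseteq> U" for n j
      using c unfolding top by blast
    show "cover_bounded c (topspace (subtopology X Y))"
      unfolding top using c by (intro bounded) blast+
  qed
qed

text \<open>(2) \<Longrightarrow> (3): the points whose image under \<Psi> is finite from coordinate m on form a G-delta
  set on which the fibres of the coordinates are bounded; X is the union of these sets.\<close>
lemma gdelta_Ufin_imp_EF_bounded:
  assumes hereditary: "\<forall>Y. gdelta_in X Y \<longrightarrow> Ufin_O_Gamma (subtopology X Y)"
    and \<Psi>: "continuous_map X EF_top \<Psi>"
  shows "EF_bounded (\<Psi> ` topspace X)"
proof -
  have coord: "continuous_map X euclidean (\<lambda>x. \<Psi> x n)" for n
    using \<Psi> unfolding continuous_map_EF_iff by blast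
  have fin: "finite {n. \<Psi> x n = \<infinity>}" if "x \<in> topspace X" for x
    using \<Psi> that unfolding continuous_map_EF_iff by blast
  define c where "c n j = {x \<in> topspace X. \<Psi> x n = enat j}" for n j
  have c_open: "openin X (c n j)" for n j
  proof -
    have "openin X {x \<in> topspace X. \<Psi> x n \<in> {enat j}}"
      by (rule openin_continuous_map_preimage[OF coord]) (simp add: open_enat)
    then show ?thesis unfolding c_def by simp
  qed
  define Y where "Y m = {x \<in> topspace X. \<forall>n\<ge>m. \<Psi> x n \<noteq> \<infinity>}" for m
  have Y_sub: "Y m \<subseteq> topspace X" for m unfolding Y_def by blast
  have Y_cover: "Y m \<subseteq> (\<Union>j. c n j)" if "m \<le> n" for m n
    using that unfolding Y_def c_def by auto
  have Y_gdelta: "gdelta_in X (Y m)" for m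
  proof -
    define W where "W n = (if m \<le> n then topspace X \<inter> (\<Union>j. c n j) else topspace X)" for n
    have "Y m = (\<Inter>n. W n)" unfolding Y_def W_def c_def by (auto split: if_splits)
    moreover have "gdelta_in X S" if "S \<in> range W" for S
      using that c_open by (auto simp: W_def intro!: open_imp_gdelta_in)
    ultimately show ?thesis by (auto intro: gdelta_in_Inter)
  qed
  have Y_bounded: "cover_bounded c (Y m)" for m
    using hereditary Y_gdelta by (intro Ufin_subspace_cover_bounded[OF _ Y_sub c_open Y_cover]) blast
  have "topspace X \<subseteq> (\<Union>m. Y m)"
  proof
    fix x assume x: "x \<in> topspace X"
    obtain m where m: "{n. \<Psi> x n = \<infinity>} \<subseteq> {..<m}"
      using finite_nat_bounded[OF fin[OF x]] by blast
    have "\<Psi> x n \<noteq> \<infinity>" if "m \<le> n" for n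
      using m that by auto
    then have "x \<in> Y m" unfolding Y_def using x by blast
    then show "x \<in> (\<Union>m. Y m)" by blast
  qed
  with cover_bounded_UN[OF Y_bounded] have "cover_bounded c (topspace X)"
    by (rule cover_bounded_mono[where m=0]) auto
  then show ?thesis unfolding c_def by (rule EF_bounded_if_fibres_bounded)
qed

lemma EF_bounded_imp_cover_bounded:
  assumes bounded: "\<forall>\<Psi>. continuous_map X EF_top \<Psi> \<longrightarrow> EF_bounded (\<Psi> ` topspace X)"
    and clopen: "\<And>n j. clopenin X (c n j)"
    and point_finite: "\<And>x. x \<in> topspace X \<Longrightarrow> finite {n. x \<notin> (\<Union>j. c n j)}"
  shows "cover_bounded c (topspace X)"
proof -
  let ?\<Psi> = "\<lambda>x n. first_index (c n) x"
  have "EF_bounded (?\<Psi> ` topspace X)"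
    using bounded continuous_first_index_EF[OF clopen point_finite] by blast
  then obtain g where g: "\<forall>f\<in>?\<Psi> ` topspace X. finite {n. \<not> f n \<le> enat (g n)}"
    unfolding EF_bounded_def by blast
  have "finite {n. \<forall>j\<le>g n. x \<notin> c n j}" if "x \<in> topspace X" for x
  proof -
    have "finite {n. \<not> first_index (c n) x \<le> enat (g n)}"
      using bspec[OF g imageI[OF that]] by simp
    then show ?thesis by (simp add: first_index_le_iff)
  qed
  then show ?thesis unfolding cover_bounded_def by blast
qed

lemma EF_bounded_imp_Ufin:
  assumes X: "open_sets_countably_clopen X"
    and bounded: "\<forall>\<Psi>. continuous_map X EF_top \<Psi> \<longrightarrow> EF_bounded (\<Psi> ` topspace X)"
  shows "Ufin_O_Gamma X"
proof -
  have "Ufin_O_Gamma (subtopology X (topspace X))"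
  proof (rule cover_bounded_imp_Ufin[OF X subset_refl])
    fix c :: "nat \<Rightarrow> nat \<Rightarrow> 'a set"
    assume clopen: "\<And>n j. clopenin X (c n j)" and cover: "\<And>n. topspace X \<subseteq> (\<Union>j. c n j)"
    have "{n. x \<notin> (\<Union>j. c n j)} = {}" if "x \<in> topspace X" for x
      using cover that by blast
    then show "cover_bounded c (topspace X)"
      by (intro EF_bounded_imp_cover_bounded[OF bounded clopen]) simp
  qed
  then show ?thesis by simp
qed

text \<open>For a bounded clopen piece sequence, the set of points covered at every level is F-sigma:
  it is the union over m of the closed set of points covered by the first pieces at all
  levels from m on, intersected with the open set of points covered at the levels below m.\<close>
lemma fsigma_if_cover_bounded:
  assumes X: "open_sets_countably_clopen X" and clopen: "\<And>j k. clopenin X (c j k)"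
    and bounded: "cover_bounded c (topspace X)"
  shows "fsigma_in X (topspace X \<inter> (\<Inter>j. \<Union>k. c j k))"
proof -
  obtain g where g: "\<And>x. x \<in> topspace X \<Longrightarrow> finite {j. \<forall>k\<le>g j. x \<notin> c j k}"
    using bounded unfolding cover_bounded_def by blast
  define K where "K m = topspace X \<inter> (\<Inter>j\<in>{m..}. \<Union>k\<le>g j. c j k)" for m
  define D where "D m = (\<Inter>j<m. \<Union>k. c j k) \<inter> topspace X" for m
  have K_closed: "closedin X (K m)" for m
    unfolding K_def using clopen by (intro closedin_Int closedin_topspace closedin_INT closedin_Union) auto
  have D_open: "openin X (D m)" for m
    unfolding D_def using clopen by (intro openin_INT openin_Union) auto
  have "topspace X \<inter> (\<Inter>j. \<Union>k. c j k) = (\<Union>m. K m \<inter> D m)"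
  proof
    show "topspace X \<inter> (\<Inter>j. \<Union>k. c j k) \<subseteq> (\<Union>m. K m \<inter> D m)"
    proof
      fix x assume x: "x \<in> topspace X \<inter> (\<Inter>j. \<Union>k. c j k)"
      then have xX: "x \<in> topspace X" by blast
      obtain m where m: "{j. \<forall>k\<le>g j. x \<notin> c j k} \<subseteq> {..<m}"
        using finite_nat_bounded[OF g[OF xX]] by blast
      have "x \<in> (\<Union>k\<le>g j. c j k)" if "m \<le> j" for j
      proof (rule ccontr)
        assume "x \<notin> (\<Union>k\<le>g j. c j k)"
        then have "j \<in> {j. \<forall>k\<le>g j. x \<notin> c j k}" by auto
        with m have "j < m" by auto
        with that show False by simp
      qed
      then have "x \<in> K m" unfolding K_def using xX by auto
      moreover have "x \<in> D m" unfolding D_def using x by blast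
      ultimately show "x \<in> (\<Union>m. K m \<inter> D m)" by blast
    qed
    show "(\<Union>m. K m \<inter> D m) \<subseteq> topspace X \<inter> (\<Inter>j. \<Union>k. c j k)"
    proof
      fix x assume "x \<in> (\<Union>m. K m \<inter> D m)"
      then obtain m where K: "x \<in> K m" and D: "x \<in> D m" by blast
      have "x \<in> (\<Union>k. c j k)" for j
      proof (cases "j < m")
        case True
        then show ?thesis using D unfolding D_def by blast
      next
        case False
        then have "x \<in> (\<Union>k\<le>g j. c j k)" using K unfolding K_def by auto
        then show ?thesis by blast
      qed
      with K show "x \<in> topspace X \<inter> (\<Inter>j. \<Union>k. c j k)" unfolding K_def by blast
    qed
  qed
  moreover have "fsigma_in X (K m \<inter> D m)" for m
    by (rule fsigma_in_Int[OF closed_imp_fsigma_in[OF K_closed] open_imp_fsigma[OF X D_open]])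
  ultimately show ?thesis by (auto intro: fsigma_in_Union)
qed

text \<open>(3) \<Longrightarrow> sigma space: write the complement of a G-delta set G as a disjoint union of closed
  sets Z j and cover the complement of each Z j by clopen pieces; G is the set of points
  covered at every level.\<close>
lemma EF_bounded_imp_sigma_space:
  assumes X: "open_sets_countably_clopen X"
    and bounded: "\<forall>\<Psi>. continuous_map X EF_top \<Psi> \<longrightarrow> EF_bounded (\<Psi> ` topspace X)"
  shows "sigma_space X"
  unfolding sigma_space_def
proof (intro allI impI)
  fix G assume "gdelta_in X G"
  then have G_sub: "G \<subseteq> topspace X" and "fsigma_in X (topspace X - G)"
    by (simp_all add: gdelta_in_fsigma_in)
  then obtain Z :: "nat \<Rightarrow> 'a set" where Z_closed: "\<And>j. closedin X (Z j)"
    and Z_disjoint: "disjoint_family Z" and Z_union: "topspace X - G = (\<Union>j. Z j)"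
    using fsigma_disjoint_closed_decomposition[OF X] by blast
  have Z_point_finite: "finite {j. x \<in> Z j}" for x
  proof (cases "\<exists>j. x \<in> Z j")
    case True
    then obtain j0 where "x \<in> Z j0" by blast
    with Z_disjoint have "{j. x \<in> Z j} \<subseteq> {j0}" unfolding disjoint_family_on_def by blast
    then show ?thesis by (rule finite_subset) simp
  qed simp
  have ex: "\<exists>d::nat \<Rightarrow> 'a set. (\<forall>k. clopenin X (d k)) \<and> topspace X - Z j = (\<Union>k. d k)" for j
  proof -
    have "openin X (topspace X - Z j)" by (rule openin_diff[OF openin_topspace Z_closed])
    then obtain d :: "nat \<Rightarrow> 'a set" where "\<And>k. clopenin X (d k)" "topspace X - Z j = (\<Union>k. d k)"
      using open_clopen_sequence[OF X] by metis
    then show ?thesis by blast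
  qed
  define c where "c j = (SOME d::nat \<Rightarrow> 'a set.
      (\<forall>k. clopenin X (d k)) \<and> topspace X - Z j = (\<Union>k. d k))" for j
  have c: "(\<forall>k. clopenin X (c j k)) \<and> topspace X - Z j = (\<Union>k. c j k)" for j
    unfolding c_def by (rule someI_ex[OF ex])
  have uncovered: "x \<notin> (\<Union>k. c j k) \<longleftrightarrow> x \<in> Z j" if "x \<in> topspace X" for x j
    using c[of j] that by blast
  have c_clopen: "clopenin X (c j k)" for j k using c by blast
  have "cover_bounded c (topspace X)"
  proof (rule EF_bounded_imp_cover_bounded[OF bounded c_clopen])
    show "finite {j. x \<notin> (\<Union>k. c j k)}" if "x \<in> topspace X" for x
      using Z_point_finite[of x] uncovered[OF that] by simp
  qed
  moreover have "G = topspace X \<inter> (\<Inter>j. \<Union>k. c j k)"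
  proof (intro equalityI subsetI)
    fix x assume "x \<in> G"
    then show "x \<in> topspace X \<inter> (\<Inter>j. \<Union>k. c j k)" using G_sub Z_union uncovered by blast
  next
    fix x assume x: "x \<in> topspace X \<inter> (\<Inter>j. \<Union>k. c j k)"
    then have "x \<notin> Z j" for j using uncovered by blast
    with x show "x \<in> G" using Z_union by blast
  qed
  ultimately show "fsigma_in X G" using fsigma_if_cover_bounded[OF X c_clopen] by simp
qed

text \<open>(4) \<Longrightarrow> (1): clopen pieces covering Y cover a G-delta superset of Y; in a sigma space it is a
  countable union of closed sets, on each of which the pieces are bounded.\<close>
lemma Ufin_sigma_imp_hereditary:
  assumes X: "open_sets_countably_clopen X" and Ufin: "Ufin_O_Gamma X"
    and sigma: "sigma_space X" and Y: "Y \<subseteq> topspace X"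
  shows "Ufin_O_Gamma (subtopology X Y)"
proof (rule cover_bounded_imp_Ufin[OF X Y])
  fix c :: "nat \<Rightarrow> nat \<Rightarrow> 'a set"
  assume clopen: "\<And>n j. clopenin X (c n j)" and cover: "\<And>n. Y \<subseteq> (\<Union>j. c n j)"
  define G where "G = (\<Inter>n. topspace X \<inter> (\<Union>j. c n j))"
  have "gdelta_in X S" if "S \<in> range (\<lambda>n. topspace X \<inter> (\<Union>j. c n j))" for S
    using that clopen by (auto intro!: open_imp_gdelta_in)
  then have "gdelta_in X G" unfolding G_def by (intro gdelta_in_Inter) auto
  with sigma have "fsigma_in X G" by (simp add: sigma_space_def)
  then obtain C :: "nat \<Rightarrow> 'a set" where C_closed: "\<And>i. closedin X (C i)" and C_union: "(\<Union>i. C i) = G"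
    unfolding fsigma_in_ascending by blast
  have "cover_bounded c (C i)" for i
  proof (rule closed_cover_bounded[OF Ufin C_closed])
    show "openin X (c n j)" for n j using clopen by blast
    show "C i \<subseteq> (\<Union>j. c n j)" for n using C_union unfolding G_def by blast
  qed
  then have "cover_bounded c (\<Union>i. C i)" by (rule cover_bounded_UN)
  moreover have "Y \<subseteq> (\<Union>i. C i)" unfolding C_union G_def using Y cover by blast
  ultimately show "cover_bounded c Y" by (rule cover_bounded_mono[where m=0]) auto
qed

theorem mainTheorem3:
  fixes X :: "'a topology"
  assumes clopen_base: "\<And>U. openin X U \<Longrightarrow>
     \<exists>\<C>. countable \<C> \<and> (\<forall>C\<in>\<C>. openin X C \<and> closedin X C) \<and> U = \<Union>\<C>"
  shows "((\<forall>Y. Y \<subseteq> topspace X \<longrightarrow> Ufin_O_Gamma (subtopology X Y))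
            \<longleftrightarrow> (\<forall>Y. gdelta_in X Y \<longrightarrow> Ufin_O_Gamma (subtopology X Y)))
       \<and> ((\<forall>Y. gdelta_in X Y \<longrightarrow> Ufin_O_Gamma (subtopology X Y))
            \<longleftrightarrow> (\<forall>\<Psi>. continuous_map X EF_top \<Psi> \<longrightarrow> EF_bounded (\<Psi> ` topspace X)))
       \<and> ((\<forall>\<Psi>. continuous_map X EF_top \<Psi> \<longrightarrow> EF_bounded (\<Psi> ` topspace X))
            \<longleftrightarrow> (Ufin_O_Gamma X \<and> sigma_space X))"
proof -
  have X: "open_sets_countably_clopen X"
    using clopen_base unfolding open_sets_countably_clopen_def by blast
  let ?P1 = "\<forall>Y. Y \<subseteq> topspace X \<longrightarrow> Ufin_O_Gamma (subtopology X Y)"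
  let ?P2 = "\<forall>Y. gdelta_in X Y \<longrightarrow> Ufin_O_Gamma (subtopology X Y)"
  let ?P3 = "\<forall>\<Psi>. continuous_map X EF_top \<Psi> \<longrightarrow> EF_bounded (\<Psi> ` topspace X)"
  let ?P4 = "Ufin_O_Gamma X \<and> sigma_space X"
  have "?P1 \<Longrightarrow> ?P2" using gdelta_in_subset by blast
  moreover have "?P2 \<Longrightarrow> ?P3" using gdelta_Ufin_imp_EF_bounded by blast
  moreover have "?P3 \<Longrightarrow> ?P4" using EF_bounded_imp_Ufin[OF X] EF_bounded_imp_sigma_space[OF X] by blast
  moreover have "?P4 \<Longrightarrow> ?P1" using Ufin_sigma_imp_hereditary[OF X] by blast
  ultimately show ?thesis by blast
qed

end
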